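(* Let $\nu>0$ be real. Then every zero $a\in\mathbb C\setminus\{0\}$ of the function $x\mapsto\big(D_qJ_\nu(\cdot;q^2)\big)(x)$ is real and simple (i.e. the ordinary derivative of $x\mapsto (D_qJ_\nu(\cdot;q^2))(x)$ does not vanish at $a$).
   Context: Fix $0<q<1$. For $a\in\mathbb C$ put $(a;q)_0=1$, $(a;q)_k=\prod_{i=0}^{k-1}(1-aq^i)$, $(a;q)_\infty=\prod_{i\ge0}(1-aq^i)$. For $\nu\in\mathbb C$ and $x\in\mathbb C\setminus\{0\}$ the Hahn–Exton $q$-Bessel function is $$J_\nu(x;q^2)=\frac{x^\nu}{(q^2;q^2)_\infty}\sum_{k=0}^\infty\frac{(-1)^kq^{k(k+1)}(q^{2\nu+2k+2};q^2)_\infty}{(q^2;q^2)_k}\,x^{2k},$$ with $x^\nu=\exp(\nu\operatorname{Log}x)$ (principal branch). The $q$-derivative is $(D_qf)(x)=\frac{f(x)-f(qx)}{(1-q)x}$ for $x\ne0$; thus $(D_qJ_\nu(\cdot;q^2))(x)=\frac{J_\nu(x;q^2)-J_\nu(qx;q^2)}{(1-q)x}$. *)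

theory Defs
  imports "HOL-Analysis.Analysis"
begin

definition qpoch :: "complex \<Rightarrow> real \<Rightarrow> nat \<Rightarrow> complex" where
  "qpoch a p k = (\<Prod>i<k. 1 - a * of_real p ^ i)"

definition qpoch_inf :: "complex \<Rightarrow> real \<Rightarrow> complex" where
  "qpoch_inf a p = lim (\<lambda>k. qpoch a p k)"

text \<open>Hahn--Exton q-Bessel function J_nu(x;q^2), with x^nu = exp(nu Log x) (principal branch)
  and q^(2nu+2k+2) = exp((2nu+2k+2) ln q).\<close>
definition HE_J :: "real \<Rightarrow> complex \<Rightarrow> complex \<Rightarrow> complex" where
  "HE_J q \<nu> x =
     exp (\<nu> * Ln x) / qpoch_inf (of_real (q^2)) (q^2) *
     (\<Sum>k. (-1)^k * of_real (q ^ (k*(k+1)))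
            * qpoch_inf (exp ((2*\<nu> + 2 * of_nat k + 2) * of_real (ln q))) (q^2)
            / qpoch (of_real (q^2)) (q^2) k * x ^ (2*k))"

definition DqJ :: "real \<Rightarrow> complex \<Rightarrow> complex \<Rightarrow> complex" where
  "DqJ q \<nu> x = (HE_J q \<nu> x - HE_J q \<nu> (of_real q * x)) / ((1 - of_real q) * x)"

end

theory Submission
  imports Defs
begin

text \<open>
  Unfolding the definition, J_nu(x;q^2) = x^nu phi(x^2) / (q^2;q^2)_inf with an entire power series phi,
  so (D_q J_nu)(x) is a nonvanishing factor times h(x^2), where h(z) = phi(z) - q^nu phi(q^2 z).
  The recurrence of the coefficients of phi gives the q-difference equation
  (phi(z) - phi(q^2 z)) - q^(2 nu) (phi(q^2 z) - phi(q^4 z)) = - q^2 z phi(q^2 z).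
  So if h(mu) = 0, then y_n = phi(q^(2n) mu) solves a discrete Sturm-Liouville problem with eigenvalue mu,
  weights q^(2n+2), boundary condition y_0 = q^nu y_1, and y_n tends to phi(0), which is nonzero.
  Summation by parts against the conjugate of y shows that mu is real and nonnegative, so the zero a,
  a square root of mu, is real. Differentiating in mu, w_n = q^(2n) phi'(q^(2n) mu) solves the same
  equation with the extra term - q^(2n+2) y_(n+1); pairing it with the conjugate of y, everything but
  the positive sum of q^(2 nu n) q^(2n+2) |y_(n+1)|^2 telescopes, which forces h'(mu) = w_0 - q^nu w_1
  to be nonzero.
\<close>

section \<open>Infinite q-Pochhammer symbols\<close>

lemma convergent_prod_qpoch:
  fixes a :: complex
  assumes "\<bar>p\<bar> < 1"
  shows "convergent_prod (\<lambda>i. 1 - a * of_real p ^ i)"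
proof -
  have "summable (\<lambda>i. norm ((1 - a * of_real p ^ i) - 1))"
    using assms by (simp add: norm_mult norm_power summable_geometric)
  then show ?thesis
    by (intro abs_convergent_prod_imp_convergent_prod summable_imp_abs_convergent_prod)
qed

lemma qpoch_tendsto_prodinf:
  assumes "\<bar>p\<bar> < 1"
  shows "(\<lambda>k. qpoch a p k) \<longlonglongrightarrow> (\<Prod>i. 1 - a * of_real p ^ i)"
  using convergent_prod_LIMSEQ[OF convergent_prod_qpoch[OF assms]]
  unfolding qpoch_def LIMSEQ_lessThan_iff_atMost .

lemma qpoch_inf_eq_prodinf:
  assumes "\<bar>p\<bar> < 1"
  shows "qpoch_inf a p = (\<Prod>i. 1 - a * of_real p ^ i)"
  unfolding qpoch_inf_def using qpoch_tendsto_prodinf[OF assms] by (rule limI)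

lemma qpoch_tendsto_qpoch_inf:
  assumes "\<bar>p\<bar> < 1"
  shows "(\<lambda>k. qpoch a p k) \<longlonglongrightarrow> qpoch_inf a p"
  using qpoch_tendsto_prodinf[OF assms] qpoch_inf_eq_prodinf[OF assms] by simp

lemma qpoch_inf_nonzero:
  assumes "\<bar>p\<bar> < 1" and "\<And>i. a * of_real p ^ i \<noteq> 1"
  shows "qpoch_inf a p \<noteq> 0"
  unfolding qpoch_inf_eq_prodinf[OF assms(1)]
  using assms by (intro prodinf_nonzero convergent_prod_qpoch) auto

lemma qpoch_inf_shift:
  assumes "\<bar>p\<bar> < 1"
  shows "qpoch_inf a p = (1 - a) * qpoch_inf (a * of_real p) p"
proof -
  have "qpoch a p (Suc k) = (1 - a) * qpoch (a * of_real p) p k" for k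
    unfolding qpoch_def by (subst prod.lessThan_Suc_shift) (simp add: mult.assoc)
  then have "(\<lambda>k. qpoch a p (Suc k)) \<longlonglongrightarrow> (1 - a) * qpoch_inf (a * of_real p) p"
    using qpoch_tendsto_qpoch_inf[OF assms] by (simp add: tendsto_mult_left)
  then have "(\<lambda>k. qpoch a p k) \<longlonglongrightarrow> (1 - a) * qpoch_inf (a * of_real p) p"
    by (rule LIMSEQ_imp_Suc)
  then show ?thesis
    using qpoch_tendsto_qpoch_inf[OF assms] LIMSEQ_unique by blast
qed

section \<open>Summation by parts for a discrete Sturm-Liouville equation\<close>

definition weighted_diff2 :: "'a::comm_ring \<Rightarrow> (nat \<Rightarrow> 'a) \<Rightarrow> nat \<Rightarrow> 'a" where
  "weighted_diff2 b y n = (y n - y (Suc n)) - b * (y (Suc n) - y (Suc (Suc n)))"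

lemma sum_weighted_diff2_mult:
  fixes b :: "'a::comm_ring_1"
  shows "(\<Sum>n<Suc N. b ^ n * weighted_diff2 b u n * v (Suc n))
       = (u 0 - u 1) * v 1 - (\<Sum>m\<in>{1..N}. b ^ m * (u m - u (Suc m)) * (v m - v (Suc m)))
         - b ^ Suc N * (u (Suc N) - u (Suc (Suc N))) * v (Suc N)"
  by (induction N) (simp_all add: weighted_diff2_def algebra_simps)

lemma eventually_weighted_norm_sum_ge:
  fixes y :: "nat \<Rightarrow> 'a::real_normed_vector"
  assumes "y \<longlonglongrightarrow> c" "c \<noteq> 0" "\<And>n. 0 < \<rho> n"
  shows "\<exists>t0>0. eventually (\<lambda>N. t0 \<le> (\<Sum>n<Suc N. \<rho> n * (norm (y (Suc n)))\<^sup>2)) sequentially"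
proof -
  obtain M where M: "\<And>n. n \<ge> M \<Longrightarrow> y n \<noteq> 0"
    using tendsto_imp_eventually_ne[OF assms(1,2)] by (auto simp: eventually_sequentially)
  have "\<rho> M * (norm (y (Suc M)))\<^sup>2 \<le> (\<Sum>n<Suc N. \<rho> n * (norm (y (Suc n)))\<^sup>2)" if "N \<ge> M" for N
    using that assms(3) by (intro member_le_sum) (auto simp: less_imp_le)
  moreover have "0 < \<rho> M * (norm (y (Suc M)))\<^sup>2"
    using M[of "Suc M"] assms(3) by simp
  ultimately show ?thesis
    unfolding eventually_sequentially by blast
qed

lemma weighted_diff2_eigenvalue_real_nonneg:
  fixes y :: "nat \<Rightarrow> complex" and b s :: real
  assumes rec: "\<And>n. weighted_diff2 (of_real b) y n = - \<mu> * of_real (\<rho> n) * y (Suc n)"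
    and boundary: "y 0 = of_real s * y 1" and "s \<le> 1"
    and b: "0 < b" "b < 1" and \<rho>: "\<And>n. 0 < \<rho> n"
    and lim: "y \<longlonglongrightarrow> c" "c \<noteq> 0"
  shows "\<mu> \<in> \<real> \<and> 0 \<le> Re \<mu>"
proof -
  define t where "t N = (\<Sum>n<Suc N. b ^ n * \<rho> n * (norm (y (Suc n)))\<^sup>2)" for N
  define R where "R N = (1 - s) * (norm (y 1))\<^sup>2 + (\<Sum>m\<in>{1..N}. b ^ m * (norm (y m - y (Suc m)))\<^sup>2)"
    for N
  define E where "E N = of_real b ^ Suc N * (y (Suc N) - y (Suc (Suc N))) * cnj (y (Suc N))" for N
  have R_nonneg: "0 \<le> R N" for N
    unfolding R_def using \<open>s \<le> 1\<close> b by (intro add_nonneg_nonneg sum_nonneg) auto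
  have key: "\<mu> * of_real (t N) = of_real (R N) + E N" for N
  proof -
    have "- (\<mu> * of_real (t N))
        = (\<Sum>n<Suc N. of_real b ^ n * weighted_diff2 (of_real b) y n * cnj (y (Suc n)))"
      unfolding rec t_def of_real_sum sum_distrib_left sum_negf[symmetric]
      by (intro sum.cong refl) (simp add: mult_ac flip: complex_norm_square)
    also have "\<dots> = - (of_real (R N) + E N)"
    proof -
      have "(\<Sum>m\<in>{1..N}. of_real b ^ m * (y m - y (Suc m)) * (cnj (y m) - cnj (y (Suc m))))
          = of_real (\<Sum>m\<in>{1..N}. b ^ m * (norm (y m - y (Suc m)))\<^sup>2)"
        unfolding of_real_sum by (intro sum.cong refl) (simp add: mult.assoc flip: complex_cnj_diff complex_norm_square)
      moreover have "(y 0 - y 1) * cnj (y 1) = - of_real ((1 - s) * (norm (y 1))\<^sup>2)"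
        unfolding boundary by (simp add: algebra_simps flip: complex_norm_square)
      ultimately show ?thesis
        unfolding sum_weighted_diff2_mult[of _ y "\<lambda>n. cnj (y n)"] R_def E_def by simp
    qed
    finally show ?thesis
      by (simp add: algebra_simps)
  qed
  have "E \<longlonglongrightarrow> 0 * (c - c) * cnj c"
    unfolding E_def using b
    by (intro tendsto_intros LIMSEQ_Suc lim LIMSEQ_power_zero) auto
  then have E: "E \<longlonglongrightarrow> 0"
    by simp
  obtain t0 where "0 < t0" and t0: "eventually (\<lambda>N. t0 \<le> t N) sequentially"
    using eventually_weighted_norm_sum_ge[OF lim, of "\<lambda>n. b ^ n * \<rho> n"] b \<rho>
    unfolding t_def by auto
  have Im_eq: "Im \<mu> * t N = Im (E N)" and Re_eq: "Re \<mu> * t N = R N + Re (E N)" for N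
    using arg_cong[OF key[of N], of Im] arg_cong[OF key[of N], of Re] by simp_all
  have "\<bar>Im \<mu>\<bar> * t0 \<le> 0"
  proof (rule tendsto_lowerbound)
    show "(\<lambda>N. norm (E N)) \<longlonglongrightarrow> 0"
      using tendsto_norm[OF E] by simp
    show "eventually (\<lambda>N. \<bar>Im \<mu>\<bar> * t0 \<le> norm (E N)) sequentially"
      using t0
    proof eventually_elim
      case (elim N)
      then have "\<bar>Im \<mu>\<bar> * t0 \<le> \<bar>Im \<mu> * t N\<bar>"
        using \<open>0 < t0\<close> by (simp add: abs_mult mult_left_mono)
      also have "\<dots> \<le> norm (E N)"
        unfolding Im_eq by (rule abs_Im_le_cmod)
      finally show ?case .
    qed
  qed simp
  then have "Im \<mu> = 0"
    using \<open>0 < t0\<close> by (simp add: mult_le_0_iff)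
  moreover have "0 \<le> Re \<mu>"
  proof (rule ccontr)
    assume "\<not> 0 \<le> Re \<mu>"
    have "0 \<le> Re \<mu> * t0"
    proof (rule tendsto_upperbound)
      show "(\<lambda>N. Re (E N)) \<longlonglongrightarrow> 0"
        using tendsto_Re[OF E] by simp
      show "eventually (\<lambda>N. Re (E N) \<le> Re \<mu> * t0) sequentially"
        using t0
      proof eventually_elim
        case (elim N)
        have "Re (E N) \<le> Re \<mu> * t N"
          using Re_eq[of N] R_nonneg[of N] by simp
        also have "\<dots> \<le> Re \<mu> * t0"
          using elim \<open>\<not> 0 \<le> Re \<mu>\<close> by (intro mult_left_mono_neg) auto
        finally show ?case .
      qed
    qed simp
    with \<open>0 < t0\<close> \<open>\<not> 0 \<le> Re \<mu>\<close> show False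
      by (simp add: zero_le_mult_iff)
  qed
  ultimately show ?thesis
    by (simp add: complex_is_Real_iff)
qed

lemma weighted_diff2_eigenvalue_simple:
  fixes u w :: "nat \<Rightarrow> complex" and b s :: real
  assumes rec_u: "\<And>n. weighted_diff2 (of_real b) u n = - \<mu> * of_real (\<rho> n) * u (Suc n)"
    and rec_w: "\<And>n. weighted_diff2 (of_real b) w n
                      = - \<mu> * of_real (\<rho> n) * w (Suc n) - of_real (\<rho> n) * u (Suc n)"
    and "\<mu> \<in> \<real>" and boundary: "u 0 = of_real s * u 1"
    and b: "0 < b" "b < 1" and \<rho>: "\<And>n. 0 < \<rho> n"
    and lim: "u \<longlonglongrightarrow> c" "c \<noteq> 0" "w \<longlonglongrightarrow> d"
  shows "w 0 \<noteq> of_real s * w 1"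
proof
  assume w_boundary: "w 0 = of_real s * w 1"
  define v where "v n = cnj (u n)" for n
  have rec_v: "weighted_diff2 (of_real b) v n = - \<mu> * of_real (\<rho> n) * v (Suc n)" for n
    using arg_cong[OF rec_u[of n], of cnj] \<open>\<mu> \<in> \<real>\<close>
    unfolding v_def weighted_diff2_def by (simp add: Reals_cnj_iff)
  define t where "t N = (\<Sum>n<Suc N. b ^ n * \<rho> n * (norm (u (Suc n)))\<^sup>2)" for N
  define W where "W N = of_real b ^ Suc N
      * ((w (Suc N) - w (Suc (Suc N))) * v (Suc N) - (v (Suc N) - v (Suc (Suc N))) * w (Suc N))" for N
  have key: "of_real (t N) = W N" for N
  proof -
    have "- of_real (t N)
        = (\<Sum>n<Suc N. of_real b ^ n * weighted_diff2 (of_real b) w n * v (Suc n))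
          - (\<Sum>n<Suc N. of_real b ^ n * weighted_diff2 (of_real b) v n * w (Suc n))"
      unfolding rec_w rec_v t_def v_def of_real_sum sum_subtractf[symmetric] sum_negf[symmetric]
      by (intro sum.cong refl) (simp add: algebra_simps flip: complex_norm_square)
    also have "\<dots> = - W N"
    proof -
      have "(w 0 - w 1) * v 1 - (v 0 - v 1) * w 1 = 0"
        unfolding w_boundary v_def boundary by (simp add: algebra_simps)
      then show ?thesis
        unfolding sum_weighted_diff2_mult W_def by (simp add: algebra_simps)
    qed
    finally show ?thesis
      by simp
  qed
  have "W \<longlonglongrightarrow> 0 * ((d - d) * cnj c - (cnj c - cnj c) * d)"
    unfolding W_def v_def using b
    by (intro tendsto_intros LIMSEQ_Suc lim LIMSEQ_power_zero) auto
  then have "(\<lambda>N. of_real (t N)) \<longlonglongrightarrow> (of_real 0 :: complex)"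
    unfolding key by simp
  then have "t \<longlonglongrightarrow> 0"
    by (simp only: tendsto_of_real_iff)
  moreover obtain t0 where "0 < t0" and "eventually (\<lambda>N. t0 \<le> t N) sequentially"
    using eventually_weighted_norm_sum_ge[OF lim(1,2), of "\<lambda>n. b ^ n * \<rho> n"] b \<rho>
    unfolding t_def by auto
  ultimately have "t0 \<le> 0"
    by (intro tendsto_lowerbound) auto
  with \<open>0 < t0\<close> show False
    by simp
qed

section \<open>The power series of the Hahn-Exton q-Bessel function\<close>

lemma summable_powser_if_coeff_ratio_bound:
  fixes c :: "nat \<Rightarrow> 'a::{real_normed_field,banach}"
  assumes ratio: "\<And>k. norm (c (Suc k)) \<le> r k * norm (c k)" and "r \<longlonglongrightarrow> 0"
  shows "summable (\<lambda>k. c k * z ^ k)"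
proof -
  have "(\<lambda>k. r k * norm z) \<longlonglongrightarrow> 0 * norm z"
    using assms(2) by (rule tendsto_mult_right)
  then have "eventually (\<lambda>k. r k * norm z < 1/2) sequentially"
    by (intro order_tendstoD) auto
  then obtain N where N: "\<And>k. k \<ge> N \<Longrightarrow> r k * norm z < 1/2"
    by (auto simp: eventually_sequentially)
  show ?thesis
  proof (rule summable_ratio_test[of "1/2" N])
    fix k assume "k \<ge> N"
    have "norm (c (Suc k) * z ^ Suc k) = norm (c (Suc k)) * norm z * norm z ^ k"
      by (simp add: norm_mult norm_power)
    also have "\<dots> \<le> (r k * norm z) * norm (c k) * norm z ^ k"
      using mult_right_mono[OF ratio[of k], of "norm z * norm z ^ k"] by (simp add: mult_ac)
    also have "\<dots> \<le> 1/2 * norm (c k) * norm z ^ k"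
      using N[OF \<open>k \<ge> N\<close>] by (intro mult_right_mono) auto
    finally show "norm (c (Suc k) * z ^ Suc k) \<le> 1/2 * norm (c k * z ^ k)"
      by (simp add: norm_mult norm_power)
  qed simp
qed

definition HE_coeff :: "real \<Rightarrow> complex \<Rightarrow> nat \<Rightarrow> complex" where
  "HE_coeff q \<nu> k = (-1)^k * of_real (q ^ (k*(k+1)))
     * qpoch_inf (of_real q powr (2*\<nu>) * of_real (q^2) ^ Suc k) (q^2) / qpoch (of_real (q^2)) (q^2) k"

definition HE_series :: "real \<Rightarrow> complex \<Rightarrow> complex \<Rightarrow> complex" where
  "HE_series q \<nu> z = (\<Sum>k. HE_coeff q \<nu> k * z ^ k)"

definition HE_series_deriv :: "real \<Rightarrow> complex \<Rightarrow> complex \<Rightarrow> complex" where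
  "HE_series_deriv q \<nu> z = (\<Sum>k. diffs (HE_coeff q \<nu>) k * z ^ k)"

lemma HE_J_eq_HE_series:
  assumes "0 < q"
  shows "HE_J q \<nu> x = exp (\<nu> * Ln x) / qpoch_inf (of_real (q^2)) (q^2) * HE_series q \<nu> (x^2)"
proof -
  have "exp ((2*\<nu> + 2 * of_nat k + 2) * of_real (ln q)) = of_real q powr (2*\<nu>) * of_real (q^2) ^ Suc k"
    for k
  proof -
    have "(2*\<nu> + 2 * of_nat k + 2) * of_real (ln q) = 2*\<nu> * of_real (ln q) + of_nat (2 * Suc k) * of_real (ln q)"
      by (simp add: algebra_simps)
    then have "exp ((2*\<nu> + 2 * of_nat k + 2) * of_real (ln q))
        = exp (2*\<nu> * of_real (ln q)) * exp (of_real (ln q)) ^ (2 * Suc k)"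
      by (simp only: exp_add exp_of_nat_mult)
    moreover have "exp (of_real (ln q)) = (of_real q :: complex)"
      using assms by (simp add: exp_of_real)
    ultimately show ?thesis
      using assms by (simp add: powr_def Ln_of_real power_mult power2_eq_square)
  qed
  then show ?thesis
    unfolding HE_J_def HE_series_def HE_coeff_def by (simp add: power_mult)
qed

lemma HE_coeff_Suc:
  assumes "0 < q" "q < 1"
  defines "P \<equiv> of_real (q^2) :: complex"
  shows "HE_coeff q \<nu> (Suc k) * (1 - P ^ Suc k) * (1 - of_real q powr (2*\<nu>) * P ^ Suc k)
       = - (P ^ Suc k * HE_coeff q \<nu> k)"
proof -
  define B where "B = of_real q powr (2*\<nu>)"
  define I where "I j = qpoch_inf (B * P ^ Suc j) (q^2)" for j
  define Q where "Q j = qpoch P (q^2) j" for j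
  have p: "\<bar>q^2\<bar> < 1"
    using assms by (simp add: power_less_one_iff)
  have P_pow_ne_1: "P ^ Suc j \<noteq> 1" for j
  proof -
    have "(q^2) ^ Suc j < 1"
      using assms by (intro power_Suc_less_one) (auto simp: abs_square_less_1)
    then show ?thesis
      unfolding P_def by (metis less_irrefl of_real_eq_1_iff of_real_power)
  qed
  have Q_nz: "Q k \<noteq> 0"
    unfolding Q_def qpoch_def using P_pow_ne_1 by (simp add: P_def flip: power_Suc)
  have Q_Suc: "Q (Suc k) = Q k * (1 - P ^ Suc k)"
    unfolding Q_def qpoch_def P_def by simp
  have I_shift: "I k = (1 - B * P ^ Suc k) * I (Suc k)"
    unfolding I_def using qpoch_inf_shift[OF p, of "B * P ^ Suc k"]
    by (simp only: P_def[symmetric] mult.assoc power_Suc2[symmetric])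
  have "Suc k * (Suc k + 1) = k * (k+1) + 2 * Suc k"
    by simp
  then have q_pow: "q ^ (Suc k * (Suc k + 1)) = q ^ (k * (k+1)) * (q^2) ^ Suc k"
    by (simp only: power_add power_mult)
  have c: "HE_coeff q \<nu> j = (-1)^j * of_real (q ^ (j*(j+1))) * I j / Q j" for j
    unfolding HE_coeff_def I_def Q_def B_def P_def ..
  show ?thesis
    unfolding c B_def[symmetric] Q_Suc q_pow I_shift
    using Q_nz P_pow_ne_1[of k] by (simp add: P_def field_simps)
qed

lemma norm_q_powr_mult_power_le:
  assumes "0 < q" "q < 1"
  shows "norm (of_real q powr (2*\<nu>) * of_real (q^2) ^ Suc k) \<le> q powr (2 * Re \<nu> + 2)"
proof -
  have "(q^2) ^ Suc k \<le> q^2"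
    using power_decreasing[of 1 "Suc k" "q^2"] assms by (simp add: power_le_one_iff abs_square_le_1)
  then have "q powr (2 * Re \<nu>) * (q^2) ^ Suc k \<le> q powr (2 * Re \<nu>) * q^2"
    by (rule mult_left_mono) simp
  then show ?thesis
    using assms by (simp add: norm_mult norm_power norm_powr_real_powr powr_add)
qed

lemma HE_series_0_nonzero:
  assumes "0 < q" "q < 1" "-1 < Re \<nu>"
  shows "HE_series q \<nu> 0 \<noteq> 0"
proof -
  have "of_real q powr (2*\<nu>) * of_real (q^2) * of_real (q^2) ^ i \<noteq> 1" for i
  proof -
    have "norm (of_real q powr (2*\<nu>) * of_real (q^2) ^ Suc i) < 1"
      using le_less_trans[OF norm_q_powr_mult_power_le[OF assms(1,2)]] powr01_less_one[OF assms(1,2)] assms(3)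
      by simp
    then show ?thesis
      by (metis mult.assoc norm_one order.irrefl power_Suc)
  qed
  then show ?thesis
    unfolding HE_series_def powser_zero HE_coeff_def qpoch_def using assms
    by (simp add: qpoch_inf_nonzero abs_square_less_1 del: of_real_power)
qed

lemma norm_HE_coeff_Suc_le:
  assumes "0 < q" "q < 1" "-1 < Re \<nu>"
  shows "norm (HE_coeff q \<nu> (Suc k))
    \<le> (q^2) ^ Suc k / ((1 - q^2) * (1 - q powr (2 * Re \<nu> + 2))) * norm (HE_coeff q \<nu> k)"
proof -
  define P where "P = (of_real (q^2) :: complex)"
  define B where "B = of_real q powr (2*\<nu>)"
  define D where "D = (1 - q^2) * (1 - q powr (2 * Re \<nu> + 2))"
  have q2: "q^2 < 1"
    using assms by (simp add: abs_square_less_1)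
  have "(q^2) ^ Suc k \<le> q^2"
    using power_decreasing[of 1 "Suc k" "q^2"] assms by (simp add: power_le_one_iff abs_square_le_1)
  then have "1 - q^2 \<le> norm (1 - P ^ Suc k)"
    using norm_triangle_ineq2[of 1 "P ^ Suc k"] by (simp add: P_def norm_mult norm_power)
  moreover have "1 - q powr (2 * Re \<nu> + 2) \<le> norm (1 - B * P ^ Suc k)"
    using norm_triangle_ineq2[of 1 "B * P ^ Suc k"] norm_q_powr_mult_power_le[OF assms(1,2), of \<nu> k]
    unfolding B_def P_def by simp
  moreover have "0 < 1 - q powr (2 * Re \<nu> + 2)"
    using powr01_less_one[OF assms(1,2)] assms(3) by simp
  ultimately have "D \<le> norm (1 - P ^ Suc k) * norm (1 - B * P ^ Suc k)" and "0 < D"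
    unfolding D_def using q2 by (auto intro: mult_mono)
  then have "norm (HE_coeff q \<nu> (Suc k)) * D
      \<le> norm (HE_coeff q \<nu> (Suc k) * (1 - P ^ Suc k) * (1 - B * P ^ Suc k))"
    by (simp add: norm_mult mult_left_mono mult.assoc)
  also have "\<dots> = (q^2) ^ Suc k * norm (HE_coeff q \<nu> k)"
    unfolding P_def B_def HE_coeff_Suc[OF assms(1,2)] by (simp add: norm_mult norm_power)
  finally show ?thesis
    using \<open>0 < D\<close> unfolding D_def by (simp add: field_simps)
qed

lemma summable_HE_series:
  assumes "0 < q" "q < 1" "-1 < Re \<nu>"
  shows "summable (\<lambda>k. HE_coeff q \<nu> k * z ^ k)"
proof (rule summable_powser_if_coeff_ratio_bound)
  show "norm (HE_coeff q \<nu> (Suc k))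
      \<le> (q^2) ^ Suc k / ((1 - q^2) * (1 - q powr (2 * Re \<nu> + 2))) * norm (HE_coeff q \<nu> k)" for k
    by (rule norm_HE_coeff_Suc_le[OF assms])
  have "(\<lambda>k. (q^2) ^ Suc k) \<longlonglongrightarrow> 0"
    using assms by (intro LIMSEQ_Suc LIMSEQ_power_zero) (auto simp: abs_square_less_1)
  then show "(\<lambda>k. (q^2) ^ Suc k / ((1 - q^2) * (1 - q powr (2 * Re \<nu> + 2)))) \<longlonglongrightarrow> 0"
    using tendsto_divide_zero by blast
qed

lemma HE_series_has_field_derivative:
  assumes "0 < q" "q < 1" "-1 < Re \<nu>"
  shows "(HE_series q \<nu> has_field_derivative HE_series_deriv q \<nu> z) (at z)"
  unfolding HE_series_def [abs_def] HE_series_deriv_def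
  by (rule termdiffs_strong_converges_everywhere) (rule summable_HE_series[OF assms])

lemma DERIV_HE_series_comp:
  assumes "0 < q" "q < 1" "-1 < Re \<nu>" and "(f has_field_derivative f') (at z within S)"
  shows "((\<lambda>z. HE_series q \<nu> (f z)) has_field_derivative HE_series_deriv q \<nu> (f z) * f') (at z within S)"
  using DERIV_chain2[OF HE_series_has_field_derivative[OF assms(1-3)] assms(4)] .

lemma isCont_HE_series:
  assumes "0 < q" "q < 1" "-1 < Re \<nu>"
  shows "isCont (HE_series q \<nu>) z"
  unfolding HE_series_def [abs_def]
  by (rule isCont_powser_converges_everywhere) (rule summable_HE_series[OF assms])

lemma isCont_HE_series_deriv:
  assumes "0 < q" "q < 1" "-1 < Re \<nu>"
  shows "isCont (HE_series_deriv q \<nu>) z"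
  unfolding HE_series_deriv_def [abs_def]
  by (intro isCont_powser_converges_everywhere termdiff_converges_all summable_HE_series[OF assms])

lemma HE_series_qdiff:
  assumes "0 < q" "q < 1" "-1 < Re \<nu>"
  defines "P \<equiv> of_real (q^2) :: complex" and "B \<equiv> of_real q powr (2*\<nu>)"
  shows "(HE_series q \<nu> z - HE_series q \<nu> (P * z)) - B * (HE_series q \<nu> (P * z) - HE_series q \<nu> (P * (P * z)))
       = - (P * z * HE_series q \<nu> (P * z))"
proof -
  let ?c = "HE_coeff q \<nu>" and ?\<phi> = "HE_series q \<nu>"
  have sums: "(\<lambda>k. ?c k * w ^ k) sums ?\<phi> w" for w
    unfolding HE_series_def by (rule summable_sums[OF summable_HE_series[OF assms(1-3)]])
  define g where "g k = ?c k * z ^ k * ((1 - P ^ k) * (1 - B * P ^ k))" for k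
  have "g = (\<lambda>k. (?c k * z ^ k - ?c k * (P * z) ^ k) - B * (?c k * (P * z) ^ k - ?c k * (P * (P * z)) ^ k))"
    unfolding g_def by (rule ext) (simp add: algebra_simps power_mult_distrib)
  then have "g sums ((?\<phi> z - ?\<phi> (P * z)) - B * (?\<phi> (P * z) - ?\<phi> (P * (P * z))))"
    by (simp only:) (intro sums_diff sums_mult sums)
  moreover have "g (Suc k) = - (P * z) * (?c k * (P * z) ^ k)" for k
  proof -
    have "g (Suc k) = ?c (Suc k) * (1 - P ^ Suc k) * (1 - B * P ^ Suc k) * z ^ Suc k"
      unfolding g_def by (simp only: mult_ac)
    also have "\<dots> = - (P * z) * (?c k * (P * z) ^ k)"
      unfolding P_def B_def HE_coeff_Suc[OF assms(1,2)] by (simp add: power_mult_distrib mult_ac)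
    finally show ?thesis .
  qed
  then have "(\<lambda>k. g (Suc k)) sums (- (P * z) * ?\<phi> (P * z))"
    by (simp only: sums_mult sums)
  then have "g sums (- (P * z) * ?\<phi> (P * z) + g 0)"
    by (simp only: sums_Suc_iff)
  moreover have "g 0 = 0"
    by (simp add: g_def)
  ultimately show ?thesis
    by (simp add: sums_unique2)
qed

lemma HE_series_deriv_qdiff:
  assumes "0 < q" "q < 1" "-1 < Re \<nu>"
  defines "P \<equiv> of_real (q^2) :: complex" and "B \<equiv> of_real q powr (2*\<nu>)"
  shows "(HE_series_deriv q \<nu> z - P * HE_series_deriv q \<nu> (P * z))
           - B * (P * HE_series_deriv q \<nu> (P * z) - P * P * HE_series_deriv q \<nu> (P * (P * z)))
       = - (P * HE_series q \<nu> (P * z)) - P * P * z * HE_series_deriv q \<nu> (P * z)"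
proof -
  let ?\<phi> = "HE_series q \<nu>" and ?\<phi>' = "HE_series_deriv q \<nu>"
  define F where "F w = (?\<phi> w - ?\<phi> (P * w)) - B * (?\<phi> (P * w) - ?\<phi> (P * (P * w))) + P * w * ?\<phi> (P * w)"
    for w
  have "F = (\<lambda>_. 0)"
    using HE_series_qdiff[OF assms(1-3), folded P_def B_def] unfolding F_def by simp
  then have "(F has_field_derivative 0) (at z)"
    by simp
  moreover have "(F has_field_derivative
      (?\<phi>' z - ?\<phi>' (P * z) * P) - B * (?\<phi>' (P * z) * P - ?\<phi>' (P * (P * z)) * (P * P))
        + (P * ?\<phi> (P * z) + P * z * (?\<phi>' (P * z) * P))) (at z)"
    unfolding F_def
    by (rule derivative_eq_intros DERIV_HE_series_comp[OF assms(1-3)] refl | simp)+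
  ultimately show ?thesis
    by (auto dest: DERIV_unique simp: algebra_simps)
qed

definition HE_orbit :: "real \<Rightarrow> complex \<Rightarrow> complex \<Rightarrow> nat \<Rightarrow> complex" where
  "HE_orbit q \<nu> z n = HE_series q \<nu> (of_real ((q^2) ^ n) * z)"

definition HE_orbit_deriv :: "real \<Rightarrow> complex \<Rightarrow> complex \<Rightarrow> nat \<Rightarrow> complex" where
  "HE_orbit_deriv q \<nu> z n = of_real ((q^2) ^ n) * HE_series_deriv q \<nu> (of_real ((q^2) ^ n) * z)"

lemma of_real_mult_of_real_power_mult:
  fixes z :: "'a::real_algebra_1"
  shows "of_real x * (of_real (x ^ n) * z) = of_real (x ^ Suc n) * z"
  by (simp add: mult.assoc)

lemma weighted_diff2_HE_orbit:
  assumes "0 < q" "q < 1" "-1 < Re \<nu>"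
  shows "weighted_diff2 (of_real q powr (2*\<nu>)) (HE_orbit q \<nu> z) n
       = - z * of_real ((q^2) ^ Suc n) * HE_orbit q \<nu> z (Suc n)"
  using HE_series_qdiff[OF assms, of "of_real ((q^2) ^ n) * z"]
  unfolding weighted_diff2_def HE_orbit_def of_real_mult_of_real_power_mult by (simp add: mult_ac)

lemma weighted_diff2_HE_orbit_deriv:
  assumes "0 < q" "q < 1" "-1 < Re \<nu>"
  shows "weighted_diff2 (of_real q powr (2*\<nu>)) (HE_orbit_deriv q \<nu> z) n
       = - z * of_real ((q^2) ^ Suc n) * HE_orbit_deriv q \<nu> z (Suc n)
         - of_real ((q^2) ^ Suc n) * HE_orbit q \<nu> z (Suc n)"
  using arg_cong[OF HE_series_deriv_qdiff[OF assms, of "of_real ((q^2) ^ n) * z"],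
      of "\<lambda>x. of_real ((q^2) ^ n) * x"]
  unfolding weighted_diff2_def HE_orbit_deriv_def HE_orbit_def of_real_mult_of_real_power_mult
  by (simp add: algebra_simps)

lemma HE_orbit_tendsto:
  assumes "0 < q" "q < 1" "-1 < Re \<nu>"
  shows "HE_orbit q \<nu> z \<longlonglongrightarrow> HE_series q \<nu> 0" and "HE_orbit_deriv q \<nu> z \<longlonglongrightarrow> 0"
proof -
  have scale: "(\<lambda>n. of_real ((q^2) ^ n)) \<longlonglongrightarrow> (0 :: complex)"
    using tendsto_of_real[OF LIMSEQ_power_zero[of "q^2"]] assms by (simp add: abs_square_less_1)
  then have orbit: "(\<lambda>n. of_real ((q^2) ^ n) * z) \<longlonglongrightarrow> 0"
    using tendsto_mult_left_zero by blast
  show "HE_orbit q \<nu> z \<longlonglongrightarrow> HE_series q \<nu> 0"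
    unfolding HE_orbit_def [abs_def]
    by (rule isCont_tendsto_compose[OF isCont_HE_series[OF assms] orbit])
  have "HE_orbit_deriv q \<nu> z \<longlonglongrightarrow> 0 * HE_series_deriv q \<nu> 0"
    unfolding HE_orbit_deriv_def [abs_def]
    by (intro tendsto_mult scale isCont_tendsto_compose[OF isCont_HE_series_deriv[OF assms] orbit])
  then show "HE_orbit_deriv q \<nu> z \<longlonglongrightarrow> 0"
    by simp
qed

section \<open>Zeros of the q-derivative\<close>

lemma continuous_within_Reals_powr:
  fixes a w :: complex
  assumes "a \<in> \<real>" "a \<noteq> 0"
  shows "continuous (at a within \<real>) (\<lambda>x. x powr w)"
proof (cases "0 < Re a")
  case True
  then have "a \<notin> \<real>\<^sub>\<le>\<^sub>0"
    by (auto simp: nonpos_Reals_def)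
  then have "isCont (\<lambda>x. x powr w) a"
    by (intro isCont_powr_complex continuous_ident continuous_const)
  then show ?thesis
    by (rule continuous_at_imp_continuous_within)
next
  case False
  with assms have "Re a < 0"
    by (auto simp: complex_is_Real_iff complex_eq_iff)
  then have "- a \<notin> \<real>\<^sub>\<le>\<^sub>0"
    by (simp add: complex_nonpos_Reals_iff)
  \<comment> \<open>Ln jumps across the negative axis, so compare with a branch that is continuous there.\<close>
  then have "isCont (\<lambda>x. (-1) powr w * (- x) powr w) a"
    by (intro continuous_mult continuous_const isCont_powr_complex continuous_minus continuous_ident) auto
  then have "continuous (at a within \<real>) (\<lambda>x. (-1) powr w * (- x) powr w)"
    by (rule continuous_at_imp_continuous_within)
  then show ?thesis
  proof (rule continuous_transform_within)
    show "0 < - Re a" "a \<in> \<real>"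
      using \<open>Re a < 0\<close> assms(1) by auto
    fix x assume "x \<in> \<real>" "dist x a < - Re a"
    then have "0 < - Re x"
      using abs_Re_le_cmod[of "x - a"] by (simp add: dist_norm)
    moreover have "x = - of_real (- Re x)"
      using \<open>x \<in> \<real>\<close> by (simp add: complex_is_Real_iff complex_eq_iff)
    ultimately show "(-1) powr w * (- x) powr w = x powr w"
      by (metis minus_minus powr_neg_real_complex sgn_pos mult_1 of_real_1)
  qed
qed

lemma DERIV_mult_vanishing:
  assumes "(g has_field_derivative D) (at a within S)" and "g a = 0"
    and "continuous (at a within S) f"
  shows "((\<lambda>x. f x * g x) has_field_derivative f a * D) (at a within S)"
proof -
  have "((\<lambda>x. f x * ((g x - g a) / (x - a))) \<longlongrightarrow> f a * D) (at a within S)"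
    using assms(1,3) by (intro tendsto_mult) (auto simp: has_field_derivative_iff continuous_within)
  then show ?thesis
    using assms(2) by (simp add: has_field_derivative_iff)
qed

lemma Reals_if_power2_nonneg:
  fixes z :: complex
  assumes "z^2 \<in> \<real>" "0 \<le> Re (z^2)"
  shows "z \<in> \<real>"
proof -
  have "Re z = 0 \<or> Im z = 0" "(Im z)\<^sup>2 \<le> (Re z)\<^sup>2"
    using assms by (auto simp: complex_is_Real_iff power2_eq_square)
  then have "Im z = 0"
    by auto
  then show ?thesis
    by (simp add: complex_is_Real_iff)
qed

definition DqJ_series :: "real \<Rightarrow> complex \<Rightarrow> complex \<Rightarrow> complex" where
  "DqJ_series q \<nu> z = HE_series q \<nu> z - of_real q powr \<nu> * HE_series q \<nu> (of_real (q^2) * z)"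

lemma qpoch_inf_q2_nonzero:
  assumes "0 < q" "q < 1"
  shows "qpoch_inf (of_real (q^2)) (q^2) \<noteq> 0"
proof (rule qpoch_inf_nonzero)
  show "\<bar>q^2\<bar> < 1"
    using assms by (simp add: abs_square_less_1)
  have "(q^2) ^ Suc i < 1" for i
    using assms by (intro power_Suc_less_one) (auto simp: abs_square_less_1)
  then show "of_real (q^2) * of_real (q^2) ^ i \<noteq> 1" for i
    by (metis less_irrefl of_real_eq_1_iff of_real_power power_Suc)
qed

definition DqJ_prefactor :: "real \<Rightarrow> complex \<Rightarrow> complex \<Rightarrow> complex" where
  "DqJ_prefactor q \<nu> x = x powr \<nu> / (qpoch_inf (of_real (q^2)) (q^2) * (1 - of_real q) * x)"

lemma DqJ_prefactor_nonzero:
  assumes "0 < q" "q < 1" "x \<noteq> 0"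
  shows "DqJ_prefactor q \<nu> x \<noteq> 0"
  using qpoch_inf_q2_nonzero[OF assms(1,2)] assms unfolding DqJ_prefactor_def by simp

lemma continuous_DqJ_prefactor:
  assumes "0 < q" "q < 1" "a \<in> \<real>" "a \<noteq> 0"
  shows "continuous (at a within \<real>) (DqJ_prefactor q \<nu>)"
  unfolding continuous_within DqJ_prefactor_def [abs_def]
  using qpoch_inf_q2_nonzero[OF assms(1,2)] assms continuous_within_Reals_powr[OF assms(3,4)]
  by (intro tendsto_divide tendsto_mult tendsto_const tendsto_ident_at) (auto simp: continuous_within)

lemma DqJ_eq_DqJ_series:
  assumes "0 < q" "q < 1"
  shows "DqJ q \<nu> x = DqJ_prefactor q \<nu> x * DqJ_series q \<nu> (x^2)"
proof (cases "x = 0")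
  case True
  then show ?thesis
    by (simp add: DqJ_def DqJ_prefactor_def)
next
  case False
  have "exp (\<nu> * Ln x) = x powr \<nu>"
    using False by (simp add: powr_def)
  moreover have "exp (\<nu> * Ln (of_real q * x)) = of_real q powr \<nu> * x powr \<nu>"
    using False assms by (simp add: powr_def Ln_times_of_real distrib_left exp_add)
  moreover have "(of_real q * x) ^ 2 = of_real (q^2) * x^2"
    by (simp add: power_mult_distrib)
  ultimately show ?thesis
    using qpoch_inf_q2_nonzero[OF assms] False assms(2)
    unfolding DqJ_def DqJ_prefactor_def HE_J_eq_HE_series[OF assms(1)] DqJ_series_def
    by (simp add: field_simps)
qed

lemma DqJ_series_eq_HE_orbit:
  "DqJ_series q \<nu> z = HE_orbit q \<nu> z 0 - of_real q powr \<nu> * HE_orbit q \<nu> z 1"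
  unfolding DqJ_series_def HE_orbit_def by simp

lemma DqJ_series_has_field_derivative:
  assumes "0 < q" "q < 1" "-1 < Re \<nu>"
  shows "(DqJ_series q \<nu> has_field_derivative
           HE_orbit_deriv q \<nu> z 0 - of_real q powr \<nu> * HE_orbit_deriv q \<nu> z 1) (at z)"
  unfolding DqJ_series_def [abs_def] HE_orbit_deriv_def
  by (rule derivative_eq_intros HE_series_has_field_derivative[OF assms] DERIV_HE_series_comp[OF assms] refl
      | simp)+

lemma DqJ_series_zero_real_nonneg:
  fixes q \<nu> :: real
  assumes "0 < q" "q < 1" "0 < \<nu>" and zero: "DqJ_series q (of_real \<nu>) \<mu> = 0"
  shows "\<mu> \<in> \<real> \<and> 0 \<le> Re \<mu>"
proof (rule weighted_diff2_eigenvalue_real_nonneg)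
  have \<nu>: "-1 < Re (of_real \<nu>)"
    using assms by simp
  have "of_real q powr (2 * of_real \<nu>) = (of_real (q powr (2*\<nu>)) :: complex)"
    using powr_of_real[of q "2*\<nu>"] assms by simp
  then show "weighted_diff2 (of_real (q powr (2*\<nu>))) (HE_orbit q \<nu> \<mu>) n
      = - \<mu> * of_real ((q^2) ^ Suc n) * HE_orbit q \<nu> \<mu> (Suc n)" for n
    using weighted_diff2_HE_orbit[OF assms(1,2) \<nu>] by simp
  show "HE_orbit q \<nu> \<mu> 0 = of_real (q powr \<nu>) * HE_orbit q \<nu> \<mu> 1"
    using zero assms(1) unfolding DqJ_series_eq_HE_orbit by (simp add: powr_of_real)
  show "HE_orbit q \<nu> \<mu> \<longlonglongrightarrow> HE_series q \<nu> 0"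
    by (rule HE_orbit_tendsto(1)[OF assms(1,2) \<nu>])
  show "HE_series q \<nu> 0 \<noteq> 0"
    by (rule HE_series_0_nonzero[OF assms(1,2) \<nu>])
  show "q powr \<nu> \<le> 1" "0 < q powr (2*\<nu>)" "q powr (2*\<nu>) < 1" "0 < (q^2) ^ Suc n" for n
    using assms powr01_less_one[OF assms(1,2), of \<nu>] powr01_less_one[OF assms(1,2), of "2*\<nu>"] by simp_all
qed

lemma DqJ_series_zero_simple:
  fixes q \<nu> :: real
  assumes "0 < q" "q < 1" "0 < \<nu>" and zero: "DqJ_series q (of_real \<nu>) \<mu> = 0"
    and deriv: "(DqJ_series q (of_real \<nu>) has_field_derivative d) (at \<mu>)"
  shows "d \<noteq> 0"
proof -
  have \<nu>: "-1 < Re (of_real \<nu>)"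
    using assms by simp
  have "HE_orbit_deriv q \<nu> \<mu> 0 \<noteq> of_real (q powr \<nu>) * HE_orbit_deriv q \<nu> \<mu> 1"
  proof (rule weighted_diff2_eigenvalue_simple)
    have b: "of_real q powr (2 * of_real \<nu>) = (of_real (q powr (2*\<nu>)) :: complex)"
      using powr_of_real[of q "2*\<nu>"] assms by simp
    show "weighted_diff2 (of_real (q powr (2*\<nu>))) (HE_orbit q \<nu> \<mu>) n
        = - \<mu> * of_real ((q^2) ^ Suc n) * HE_orbit q \<nu> \<mu> (Suc n)" for n
      using weighted_diff2_HE_orbit[OF assms(1,2) \<nu>] b by simp
    show "weighted_diff2 (of_real (q powr (2*\<nu>))) (HE_orbit_deriv q \<nu> \<mu>) n
        = - \<mu> * of_real ((q^2) ^ Suc n) * HE_orbit_deriv q \<nu> \<mu> (Suc n)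
          - of_real ((q^2) ^ Suc n) * HE_orbit q \<nu> \<mu> (Suc n)" for n
      using weighted_diff2_HE_orbit_deriv[OF assms(1,2) \<nu>] b by simp
    show "\<mu> \<in> \<real>"
      using DqJ_series_zero_real_nonneg[OF assms(1-3) zero] by simp
    show "HE_orbit q \<nu> \<mu> 0 = of_real (q powr \<nu>) * HE_orbit q \<nu> \<mu> 1"
      using zero assms(1) unfolding DqJ_series_eq_HE_orbit by (simp add: powr_of_real)
    show "HE_orbit q \<nu> \<mu> \<longlonglongrightarrow> HE_series q \<nu> 0" "HE_orbit_deriv q \<nu> \<mu> \<longlonglongrightarrow> 0"
      by (rule HE_orbit_tendsto[OF assms(1,2) \<nu>])+
    show "HE_series q \<nu> 0 \<noteq> 0"
      by (rule HE_series_0_nonzero[OF assms(1,2) \<nu>])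
    show "0 < q powr (2*\<nu>)" "q powr (2*\<nu>) < 1" "0 < (q^2) ^ Suc n" for n
      using assms powr01_less_one[OF assms(1,2), of "2*\<nu>"] by simp_all
  qed
  moreover have "d = HE_orbit_deriv q \<nu> \<mu> 0 - of_real q powr of_real \<nu> * HE_orbit_deriv q \<nu> \<mu> 1"
    by (rule DERIV_unique[OF deriv DqJ_series_has_field_derivative[OF assms(1,2) \<nu>]])
  ultimately show ?thesis
    using assms(1) by (simp add: powr_of_real)
qed

theorem proposition3p9:
  fixes q \<nu> :: real and a :: complex
  assumes "0 < q" and "q < 1" and "0 < \<nu>"
    and "a \<noteq> 0" and "DqJ q (of_real \<nu>) a = 0"
  shows "a \<in> \<real> \<and>
         (\<exists>d. d \<noteq> 0 \<and> (DqJ q (of_real \<nu>) has_field_derivative d) (at a within \<real>))"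
proof -
  note DqJ = DqJ_eq_DqJ_series[OF assms(1,2), abs_def]
  note prefactor = DqJ_prefactor_nonzero[OF assms(1,2,4)]
  have zero: "DqJ_series q \<nu> (a^2) = 0"
    using assms(5) prefactor unfolding DqJ by simp
  have "a \<in> \<real>"
    using DqJ_series_zero_real_nonneg[OF assms(1-3) zero] Reals_if_power2_nonneg by blast
  have "-1 < Re (of_real \<nu> :: complex)"
    using assms(3) by simp
  then obtain d where d: "(DqJ_series q \<nu> has_field_derivative d) (at (a^2))"
    using DqJ_series_has_field_derivative[OF assms(1,2)] by blast
  have "((\<lambda>x. x^2) has_field_derivative 2 * a) (at a within \<real>)"
    by (auto intro!: derivative_eq_intros)
  from DERIV_chain2[OF d this]
  have chain: "((\<lambda>x. DqJ_series q \<nu> (x^2)) has_field_derivative d * (2 * a)) (at a within \<real>)"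
    by simp
  have "(DqJ q \<nu> has_field_derivative DqJ_prefactor q \<nu> a * (d * (2 * a))) (at a within \<real>)"
    unfolding DqJ
    by (rule DERIV_mult_vanishing[OF chain zero continuous_DqJ_prefactor[OF assms(1,2) \<open>a \<in> \<real>\<close> assms(4)]])
  moreover have "DqJ_prefactor q \<nu> a * (d * (2 * a)) \<noteq> 0"
    using prefactor DqJ_series_zero_simple[OF assms(1-3) zero d] assms(4) by simp
  ultimately show ?thesis
    using \<open>a \<in> \<real>\<close> by blast
qed

end
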